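(* Let $\mathcal{A}=\{A_1,\dots,A_m\}\subseteq\mathbb{R}^{n\times n}$, let $r\ge1$ be an integer, and let $J\subseteq[n]$ be such that for every $i\in[m]$ and every $j\in J$ the $j$-th column of $A_i$ is zero. Define $\mathscr{A}^{(0)}=\{2r\,\mathbf{e}_j: j\in[n]\}$ and, for $s\ge1$, $\mathscr{A}^{(s)}=\mathscr{A}^{(s-1)}\cup\bigcup_{i=1}^m\operatorname{supp}(p_{s-1}(A_i\mathbf{x}))$, where $p_{s-1}(\mathbf{x})=\sum_{\alpha\in\mathscr{A}^{(s-1)}}c_\alpha\mathbf{x}^\alpha$ with coefficients $c_\alpha\in(0,1)$ chosen arbitrarily at each step. Then $\mathscr{A}^{(s)}\subseteq\tilde{\mathbb{N}}^{n-|J|}_{2r}\cup\{\mathbf{b}_j\}_{j\in J}$ for all $s\ge1$.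
   Context: $\mathbf{e}_j$ is the $j$-th unit vector of $\mathbb{N}^n$ and $\mathbf{b}_j=2r\,\mathbf{e}_j$. $\tilde{\mathbb{N}}^{n-|J|}_{2r}=\{\alpha\in\mathbb{N}^n:\sum_i\alpha_i\le 2r,\ \alpha_i=0\text{ for }i\in J\}$. $p(A_i\mathbf{x})$ denotes the polynomial $\mathbf{x}\mapsto p(A_i\mathbf{x})$, and $\operatorname{supp}$ the set of exponents of its monomials with nonzero coefficients. *)

theory Defs
  imports Complex_Main "HOL-Library.Poly_Mapping"
begin

(* Multivariate real polynomials in variables x_0, x_1, ... are represented as
  finitely supported maps from exponent vectors (nat 0 nat) to real coefficients;
  Poly_Mapping provides the (convolution) ring structure. The support of a polynomial p
  is Poly_Mapping.keys p. Indices are 0-based: [n] is rendered as {..<n}. *)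

type_synonym rpoly = "(nat \<Rightarrow>\<^sub>0 nat) \<Rightarrow>\<^sub>0 real"

definition Xvar :: "nat \<Rightarrow> rpoly" where
  "Xvar l = Poly_Mapping.single (Poly_Mapping.single l 1) 1"

definition constp :: "real \<Rightarrow> rpoly" where
  "constp c = Poly_Mapping.single 0 c"

(* The polynomial x  p(M x) for an nn matrix M (entries M k l, k,l < n). *)
definition lin_form :: "(nat \<Rightarrow> nat \<Rightarrow> real) \<Rightarrow> nat \<Rightarrow> nat \<Rightarrow> rpoly" where
  "lin_form M n k = (\<Sum>l<n. constp (M k l) * Xvar l)"

definition subst_monom :: "(nat \<Rightarrow> nat \<Rightarrow> real) \<Rightarrow> nat \<Rightarrow> (nat \<Rightarrow>\<^sub>0 nat) \<Rightarrow> rpoly" where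
  "subst_monom M n a = (\<Prod>k\<in>Poly_Mapping.keys a. lin_form M n k ^ Poly_Mapping.lookup a k)"

definition lin_subst :: "(nat \<Rightarrow> nat \<Rightarrow> real) \<Rightarrow> nat \<Rightarrow> rpoly \<Rightarrow> rpoly" where
  "lin_subst M n p = (\<Sum>a\<in>Poly_Mapping.keys p. constp (Poly_Mapping.lookup p a) * subst_monom M n a)"

definition poly_of_coeffs :: "(nat \<Rightarrow>\<^sub>0 nat) set \<Rightarrow> ((nat \<Rightarrow>\<^sub>0 nat) \<Rightarrow> real) \<Rightarrow> rpoly" where
  "poly_of_coeffs S c = (\<Sum>\<alpha>\<in>S. Poly_Mapping.single \<alpha> (c \<alpha>))"

(* The sets ^(s): A i is the matrix A_{i+1} (i < m), c s are the coefficients of p_s. *)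
primrec Aset :: "(nat \<Rightarrow> nat \<Rightarrow> nat \<Rightarrow> real) \<Rightarrow> nat \<Rightarrow> nat \<Rightarrow> nat
    \<Rightarrow> (nat \<Rightarrow> (nat \<Rightarrow>\<^sub>0 nat) \<Rightarrow> real) \<Rightarrow> nat \<Rightarrow> (nat \<Rightarrow>\<^sub>0 nat) set" where
  "Aset A m n r c 0 = {Poly_Mapping.single j (2 * r) | j. j < n}"
| "Aset A m n r c (Suc s) =
     Aset A m n r c s \<union>
     (\<Union>i<m. Poly_Mapping.keys (lin_subst (A i) n (poly_of_coeffs (Aset A m n r c s) (c s))))"

definition tildeN :: "nat \<Rightarrow> nat set \<Rightarrow> nat \<Rightarrow> (nat \<Rightarrow>\<^sub>0 nat) set" where
  "tildeN n J d = {\<alpha>. Poly_Mapping.keys \<alpha> \<subseteq> {..<n} \<and> (\<Sum>k\<in>Poly_Mapping.keys \<alpha>. Poly_Mapping.lookup \<alpha> k) \<le> d \<and> (\<forall>i\<in>J. Poly_Mapping.lookup \<alpha> i = 0)}"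

end

theory Submission
  imports Defs
begin

text \<open>The substitution \<open>x \<mapsto> A\<^sub>i x\<close> sends every variable to a linear form in the
  variables outside \<open>J\<close>, because the columns of \<open>A\<^sub>i\<close> indexed by \<open>J\<close> vanish. Hence it sends a
  monomial of degree \<open>d\<close> to a homogeneous polynomial of degree \<open>d\<close> in the variables outside \<open>J\<close>,
  so every new exponent lies in \<open>tildeN n J (2 * r)\<close> as soon as all previous ones have degree at most
  \<open>2r\<close>. The coefficients play no role, and neither does \<open>r \<ge> 1\<close>.\<close>

definition total_degree :: "('v \<Rightarrow>\<^sub>0 nat) \<Rightarrow> nat" where
  "total_degree \<alpha> = (\<Sum>k\<in>Poly_Mapping.keys \<alpha>. Poly_Mapping.lookup \<alpha> k)"

lemma total_degree_add: "total_degree (\<alpha> + \<beta>) = total_degree \<alpha> + total_degree \<beta>"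
  unfolding total_degree_def by (rule setsum_keys_plus_distrib) simp_all

lemma total_degree_single [simp]: "total_degree (Poly_Mapping.single k d) = d"
  by (simp add: total_degree_def)

definition homogeneous_in :: "'v set \<Rightarrow> nat \<Rightarrow> (('v \<Rightarrow>\<^sub>0 nat) \<Rightarrow>\<^sub>0 'a::zero) \<Rightarrow> bool" where
  "homogeneous_in V d p \<longleftrightarrow>
     (\<forall>\<alpha>\<in>Poly_Mapping.keys p. Poly_Mapping.keys \<alpha> \<subseteq> V \<and> total_degree \<alpha> = d)"

lemma homogeneous_in_zero: "homogeneous_in V d 0"
  by (simp add: homogeneous_in_def)

lemma homogeneous_in_one: "homogeneous_in V 0 1"
  by (simp add: homogeneous_in_def total_degree_def)

lemma homogeneous_in_add:
  "homogeneous_in V d p \<Longrightarrow> homogeneous_in V d q \<Longrightarrow> homogeneous_in V d (p + q)"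
  unfolding homogeneous_in_def by (meson Un_iff keys_add subsetD)

lemma homogeneous_in_mult:
  fixes p q :: "('v \<Rightarrow>\<^sub>0 nat) \<Rightarrow>\<^sub>0 'a::semiring_0"
  assumes "homogeneous_in V d p" and "homogeneous_in V e q"
  shows "homogeneous_in V (d + e) (p * q)"
  unfolding homogeneous_in_def
proof
  fix \<gamma> assume "\<gamma> \<in> Poly_Mapping.keys (p * q)"
  then obtain \<alpha> \<beta> where \<gamma>: "\<gamma> = \<alpha> + \<beta>"
    and "\<alpha> \<in> Poly_Mapping.keys p" and "\<beta> \<in> Poly_Mapping.keys q"
    using keys_mult by blast
  with assms have "Poly_Mapping.keys \<alpha> \<subseteq> V" "Poly_Mapping.keys \<beta> \<subseteq> V"
    and "total_degree \<alpha> = d" "total_degree \<beta> = e"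
    unfolding homogeneous_in_def by blast+
  moreover have "Poly_Mapping.keys \<gamma> \<subseteq> Poly_Mapping.keys \<alpha> \<union> Poly_Mapping.keys \<beta>"
    unfolding \<gamma> by (rule keys_add)
  ultimately show "Poly_Mapping.keys \<gamma> \<subseteq> V \<and> total_degree \<gamma> = d + e"
    by (auto simp: \<gamma> total_degree_add)
qed

lemma homogeneous_in_power:
  fixes p :: "('v \<Rightarrow>\<^sub>0 nat) \<Rightarrow>\<^sub>0 'a::comm_semiring_1"
  shows "homogeneous_in V d p \<Longrightarrow> homogeneous_in V (k * d) (p ^ k)"
  by (induction k) (auto simp: homogeneous_in_one homogeneous_in_mult)

lemma homogeneous_in_sum:
  "(\<And>x. x \<in> S \<Longrightarrow> homogeneous_in V d (f x)) \<Longrightarrow> homogeneous_in V d (\<Sum>x\<in>S. f x)"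
  by (induction S rule: infinite_finite_induct) (auto simp: homogeneous_in_zero homogeneous_in_add)

lemma homogeneous_in_prod:
  fixes f :: "'b \<Rightarrow> ('v \<Rightarrow>\<^sub>0 nat) \<Rightarrow>\<^sub>0 'a::comm_semiring_1"
  shows "(\<And>x. x \<in> S \<Longrightarrow> homogeneous_in V (d x) (f x)) \<Longrightarrow>
    homogeneous_in V (\<Sum>x\<in>S. d x) (\<Prod>x\<in>S. f x)"
  by (induction S rule: infinite_finite_induct) (auto simp: homogeneous_in_one homogeneous_in_mult)

lemma keys_constp_mult: "Poly_Mapping.keys (constp c * p) \<subseteq> Poly_Mapping.keys p"
  using keys_mult[of "constp c" p] by (auto simp: constp_def split: if_splits)

lemma homogeneous_in_lin_form:
  assumes "\<And>l. l < n \<Longrightarrow> l \<notin> V \<Longrightarrow> M k l = 0"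
  shows "homogeneous_in V 1 (lin_form M n k)"
  unfolding lin_form_def
proof (rule homogeneous_in_sum)
  fix l assume "l \<in> {..<n}"
  have "constp (M k l) * Xvar l = Poly_Mapping.single (Poly_Mapping.single l 1) (M k l)"
    by (simp add: constp_def Xvar_def mult_single)
  then show "homogeneous_in V 1 (constp (M k l) * Xvar l)"
    using assms \<open>l \<in> {..<n}\<close> by (auto simp: homogeneous_in_def)
qed

lemma homogeneous_in_subst_monom:
  assumes "\<And>k l. k \<in> Poly_Mapping.keys \<alpha> \<Longrightarrow> l < n \<Longrightarrow> l \<notin> V \<Longrightarrow> M k l = 0"
  shows "homogeneous_in V (total_degree \<alpha>) (subst_monom M n \<alpha>)"
  unfolding subst_monom_def total_degree_def
  using homogeneous_in_power[OF homogeneous_in_lin_form] assms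
  by (intro homogeneous_in_prod) (metis mult_1_right)

lemma keys_lin_subst:
  assumes "\<And>k l. k < n \<Longrightarrow> l < n \<Longrightarrow> l \<notin> V \<Longrightarrow> M k l = 0"
    and "\<And>\<alpha>. \<alpha> \<in> Poly_Mapping.keys p \<Longrightarrow> Poly_Mapping.keys \<alpha> \<subseteq> {..<n}"
    and "\<beta> \<in> Poly_Mapping.keys (lin_subst M n p)"
  shows "Poly_Mapping.keys \<beta> \<subseteq> V \<and> (\<exists>\<alpha>\<in>Poly_Mapping.keys p. total_degree \<beta> = total_degree \<alpha>)"
proof -
  have "\<beta> \<in> (\<Union>\<alpha>\<in>Poly_Mapping.keys p.
      Poly_Mapping.keys (constp (Poly_Mapping.lookup p \<alpha>) * subst_monom M n \<alpha>))"
    using assms(3) unfolding lin_subst_def by (rule subsetD[OF keys_sum])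
  then obtain \<alpha> where \<alpha>: "\<alpha> \<in> Poly_Mapping.keys p"
    and "\<beta> \<in> Poly_Mapping.keys (constp (Poly_Mapping.lookup p \<alpha>) * subst_monom M n \<alpha>)"
    by blast
  then have \<beta>: "\<beta> \<in> Poly_Mapping.keys (subst_monom M n \<alpha>)"
    using keys_constp_mult by blast
  have "homogeneous_in V (total_degree \<alpha>) (subst_monom M n \<alpha>)"
  proof (rule homogeneous_in_subst_monom)
    show "M k l = 0" if "k \<in> Poly_Mapping.keys \<alpha>" "l < n" "l \<notin> V" for k l
      using assms(1,2) \<alpha> that by blast
  qed
  with \<beta> have "Poly_Mapping.keys \<beta> \<subseteq> V \<and> total_degree \<beta> = total_degree \<alpha>"
    unfolding homogeneous_in_def by blast
  with \<alpha> show ?thesis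
    by blast
qed

lemma mem_tildeN_iff:
  "\<alpha> \<in> tildeN n J d \<longleftrightarrow> Poly_Mapping.keys \<alpha> \<subseteq> {..<n} - J \<and> total_degree \<alpha> \<le> d"
  by (auto simp: tildeN_def total_degree_def in_keys_iff)

lemma keys_lin_subst_subset_tildeN:
  assumes "\<And>k j. k < n \<Longrightarrow> j \<in> J \<Longrightarrow> M k j = 0"
    and "\<And>\<alpha>. \<alpha> \<in> Poly_Mapping.keys p \<Longrightarrow> Poly_Mapping.keys \<alpha> \<subseteq> {..<n} \<and> total_degree \<alpha> \<le> d"
  shows "Poly_Mapping.keys (lin_subst M n p) \<subseteq> tildeN n J d"
proof
  fix \<beta> assume "\<beta> \<in> Poly_Mapping.keys (lin_subst M n p)"
  then have "Poly_Mapping.keys \<beta> \<subseteq> {..<n} - J \<and>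
      (\<exists>\<alpha>\<in>Poly_Mapping.keys p. total_degree \<beta> = total_degree \<alpha>)"
    using assms by (intro keys_lin_subst) auto
  then show "\<beta> \<in> tildeN n J d"
    using assms(2) by (auto simp: mem_tildeN_iff)
qed

lemma keys_poly_of_coeffs: "Poly_Mapping.keys (poly_of_coeffs S c) \<subseteq> S"
proof -
  have "Poly_Mapping.keys (poly_of_coeffs S c) \<subseteq>
      (\<Union>\<alpha>\<in>S. Poly_Mapping.keys (Poly_Mapping.single \<alpha> (c \<alpha>)))"
    unfolding poly_of_coeffs_def by (rule keys_sum)
  also have "\<dots> \<subseteq> S"
    by auto
  finally show ?thesis .
qed

theorem proposition11p1:
  fixes A :: "nat \<Rightarrow> nat \<Rightarrow> nat \<Rightarrow> real" and m n r :: nat and J :: "nat set"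
    and c :: "nat \<Rightarrow> (nat \<Rightarrow>\<^sub>0 nat) \<Rightarrow> real"
  assumes "r \<ge> 1"
    and "J \<subseteq> {..<n}"
    and "\<forall>i<m. \<forall>j\<in>J. \<forall>k<n. A i k j = 0"
    and "\<forall>s. \<forall>\<alpha>\<in>Aset A m n r c s. 0 < c s \<alpha> \<and> c s \<alpha> < 1"
  shows "\<forall>s\<ge>1. Aset A m n r c s \<subseteq>
           tildeN n J (2 * r) \<union> {Poly_Mapping.single j (2 * r) | j. j \<in> J}"
proof -
  let ?T = "tildeN n J (2 * r) \<union> {Poly_Mapping.single j (2 * r) | j. j \<in> J}"
  have bounded: "Poly_Mapping.keys \<alpha> \<subseteq> {..<n} \<and> total_degree \<alpha> \<le> 2 * r" if "\<alpha> \<in> ?T" for \<alpha>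
    using that assms(2) by (auto simp: mem_tildeN_iff split: if_splits)
  have "Aset A m n r c s \<subseteq> ?T" for s
  proof (induction s)
    case 0
    show ?case
      by (auto simp: mem_tildeN_iff split: if_splits)
  next
    case (Suc s)
    have "Poly_Mapping.keys (lin_subst (A i) n (poly_of_coeffs (Aset A m n r c s) (c s)))
        \<subseteq> tildeN n J (2 * r)" if "i < m" for i
    proof (rule keys_lin_subst_subset_tildeN)
      show "A i k j = 0" if "k < n" and "j \<in> J" for k j
        using assms(3) \<open>i < m\<close> that by blast
      show "Poly_Mapping.keys \<alpha> \<subseteq> {..<n} \<and> total_degree \<alpha> \<le> 2 * r"
        if "\<alpha> \<in> Poly_Mapping.keys (poly_of_coeffs (Aset A m n r c s) (c s))" for \<alpha>
        using bounded Suc.IH keys_poly_of_coeffs that by (meson subsetD)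
    qed
    with Suc.IH show ?case
      unfolding Aset.simps by (intro Un_least UN_least) auto
  qed
  then show ?thesis
    by blast
qed

end
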